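(* In the Jolteon protocol described in the context, for every two globally direct-committed blocks $B,B'$, either $B\longleftarrow^* B'$ or $B'\longleftarrow^* B$.
   Context: Jolteon protocol. There are $n=3f+1$ replicas, at most $f$ Byzantine, the rest honest; reliable authenticated channels; ideal threshold signatures in which $2f+1$ shares on the same message from distinct replicas combine into a threshold signature. A block is $B=(id,qc,tc,r,v,txn)$, with $qc$ a quorum certificate of its parent, $tc$ a timeout certificate or $\bot$, round $r$, view $v=0$, transactions $txn$, and $id$ a collision-resistant hash of the contents. A quorum certificate (QC) for $B$ is a threshold signature on $(B.id,B.r,B.v)$ from $2f+1$ shares (votes); $qc.r=B.r$; $B$ is certified if a QC for it exists; a genesis block of round $0$ has a QC. QCs are compared by round. Notation: $B_i\longleftarrow QC_i\longleftarrow B_{i+1}$ means $QC_i$ certifies $B_i$ and is contained in $B_{i+1}$; $B\longleftarrow^* B'$ ($B'$ extends $B$) means there is such a sequence (possibly of length zero) from $B$ to $B'$. A timeout message for round $r$ is a share on $r$ with the sender's $qc_{high}$; a timeout certificate (TC) for round $r$ is a threshold signature on $r$ from $2f+1$ timeout messages together with their $2f+1$ $qc_{high}$'s (all of round $<r$). Each round $r$ has a leader $L_r$ (round robin). Each replica keeps $r_{vote}=0$, $r_{cur}=1$, $qc_{high}$ = genesis QC. Propose: upon entering round $r$, $L_r$ multicasts $B=(id,qc_{high},tc,r,0,txn)$, with $tc$ the round-$(r-1)$ TC if $L_r$ entered round $r$ by receiving it, else $\bot$. Vote: upon the first valid proposal $B=(id,qc,tc,r,v,txn)$ from $L_r$,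 execute Advance Round, Lock, Commit; then if $r=r_{cur}$, $v=v_{cur}=0$, $r>r_{vote}$, and either $r=qc.r+1$ or ($r=tc.r+1$ and $qc.r\ge\max\{q.r: q$ a $qc_{high}$ in $tc\}$), send a share on $(id,r,v)$ to $L_{r+1}$ and set $r_{vote}\gets r$. Lock: upon seeing a valid QC $qc$ (formed from votes or contained in a proposal, timeout message or TC), set $qc_{high}\gets\max(qc_{high},qc)$. Commit: whenever there are two certified blocks $B,B'$ with $B'.qc$ certifying $B$ and $B'.r=B.r+1$, commit $B$ and all its ancestors. Advance Round: set $r_{cur}\gets\max(r_{cur},r)$ upon receiving or forming a round-$(r-1)$ QC or TC. Timer: upon entering round $r$, send the round-$(r-1)$ TC to $L_r$ if held and reset a timer; on expiry stop voting in round $r_{cur}$ and multicast a timeout message; upon a valid timeout message or TC execute Advance Round, Lock, Commit; upon $2f+1$ timeout messages form a TC. Definition: a block $B$ is globally direct-committed if $f+1$ honest replicas each successfully perform the Vote step on a proposal of a block $B'$ in round $B.r+1$ such that $B'.qc$ certifies $B$ (these Vote calls invoke Lock, setting $qc_{high}\gets B'.qc$, and produce $f+1$ matching votes). *)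

theory Defs
  imports Main
begin

text \<open>Block identifiers are modelled
by the blocks themselves (ideal collision-resistant hash): the QC of a block stores the
certified block. A TC stores its round and the 2f+1 timeout messages (sender, qc_high)
it was formed from.\<close>

datatype 'tx block = Genesis | Block "'tx qc" "'tx tc option" nat nat 'tx
and 'tx qc = QC "'tx block" nat nat
and 'tx tc = TC nat "(nat \<times> 'tx qc) list"

fun bround :: "'tx block \<Rightarrow> nat" where
  "bround Genesis = 0"
| "bround (Block q t r v x) = r"

fun bview :: "'tx block \<Rightarrow> nat" where
  "bview Genesis = 0"
| "bview (Block q t r v x) = v"

fun qc_blk :: "'tx qc \<Rightarrow> 'tx block" where
  "qc_blk (QC b r v) = b"

fun qc_r :: "'tx qc \<Rightarrow> nat" where
  "qc_r (QC b r v) = r"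

fun tc_r :: "'tx tc \<Rightarrow> nat" where
  "tc_r (TC r l) = r"

fun tc_qcs :: "'tx tc \<Rightarrow> (nat \<times> 'tx qc) list" where
  "tc_qcs (TC r l) = l"

definition genesis_qc :: "'tx qc" where
  "genesis_qc = QC Genesis 0 0"

definition nrep :: "nat \<Rightarrow> nat" where
  "nrep f = 3 * f + 1"

definition leader :: "nat \<Rightarrow> nat \<Rightarrow> nat" where
  "leader f r = r mod nrep f"

text \<open>The global state records the
messages sent by honest replicas: proposals (sent by the leader of the block's round),
vote shares (replica, block id, round, view) and timeout messages (replica, round, qc_high).\<close>

record 'tx lst =
  rvote :: nat
  rcur :: nat
  qchigh :: "'tx qc"
  seen :: "nat set"      (* rounds in which a valid proposal has already been processed *)
  touted :: "nat set"    (* rounds whose timer expired (no more voting there) *)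

record 'tx gst =
  loc :: "nat \<Rightarrow> 'tx lst"
  props :: "'tx block set"
  votes :: "(nat \<times> 'tx block \<times> nat \<times> nat) set"
  touts :: "(nat \<times> nat \<times> 'tx qc) set"

text \<open>Ideal threshold signatures: Byzantine replicas (set F) can produce shares on anything;
honest shares exist only if sent.\<close>

definition valid_qc :: "nat \<Rightarrow> nat set \<Rightarrow> ('tx,'z) gst_scheme \<Rightarrow> 'tx qc \<Rightarrow> bool" where
  "valid_qc f F s q = (case q of QC b r v \<Rightarrow>
      r = bround b \<and> v = bview b \<and>
      (b = Genesis \<or> 2 * f + 1 \<le> card {j. j < nrep f \<and> (j \<in> F \<or> (j, b, r, v) \<in> votes s)}))"

definition valid_tc :: "nat \<Rightarrow> nat set \<Rightarrow> ('tx,'z) gst_scheme \<Rightarrow> 'tx tc \<Rightarrow> bool" where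
  "valid_tc f F s t = (case t of TC r l \<Rightarrow>
      length l = 2 * f + 1 \<and> distinct (map fst l) \<and>
      (\<forall>(j, q) \<in> set l. j < nrep f \<and> (j \<in> F \<or> (j, r, q) \<in> touts s)
                       \<and> valid_qc f F s q \<and> qc_r q < r))"

definition valid_block :: "nat \<Rightarrow> nat set \<Rightarrow> ('tx,'z) gst_scheme \<Rightarrow> 'tx block \<Rightarrow> bool" where
  "valid_block f F s B = (case B of Genesis \<Rightarrow> False
     | Block q tco r v x \<Rightarrow> valid_qc f F s q \<and> (\<forall>t. tco = Some t \<longrightarrow> valid_tc f F s t))"

definition lockq :: "'tx qc \<Rightarrow> 'tx qc \<Rightarrow> 'tx qc" where
  "lockq q qh = (if qc_r qh < qc_r q then q else qh)"

definition observe :: "'tx qc list \<Rightarrow> nat \<Rightarrow> ('tx,'z) lst_scheme \<Rightarrow> ('tx,'z) lst_scheme" where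
  "observe qs rb ls = ls\<lparr>rcur := max (rcur ls) rb, qchigh := fold lockq qs (qchigh ls)\<rparr>"

definition tco_qcs :: "'tx tc option \<Rightarrow> 'tx qc list" where
  "tco_qcs tco = (case tco of None \<Rightarrow> [] | Some t \<Rightarrow> map snd (tc_qcs t))"

definition tco_bound :: "'tx tc option \<Rightarrow> nat" where
  "tco_bound tco = (case tco of None \<Rightarrow> 0 | Some t \<Rightarrow> tc_r t + 1)"

text \<open>Propose: if replica i entered a new round (rcur grew from ls to ls') and is its leader,
it multicasts a new block with its qc_high and the round-(r-1) TC by which it entered, if any.\<close>

definition enter_props :: "nat \<Rightarrow> nat \<Rightarrow> 'tx lst \<Rightarrow> 'tx lst \<Rightarrow> 'tx tc option \<Rightarrow> 'tx
    \<Rightarrow> 'tx block set \<Rightarrow> 'tx block set" where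
  "enter_props f i ls ls' tco x P =
     (if rcur ls < rcur ls' \<and> i = leader f (rcur ls')
      then insert (Block (qchigh ls')
                     (case tco of None \<Rightarrow> None
                        | Some t \<Rightarrow> if tc_r t + 1 = rcur ls' then Some t else None)
                     (rcur ls') 0 x) P
      else P)"

definition vote_ok :: "'tx lst \<Rightarrow> 'tx block \<Rightarrow> bool" where
  "vote_ok ls B = (case B of Genesis \<Rightarrow> False
     | Block q tco r v x \<Rightarrow>
         r = rcur ls \<and> v = 0 \<and> rvote ls < r \<and> r \<notin> touted ls \<and>
         (r = qc_r q + 1 \<or>
          (\<exists>t. tco = Some t \<and> r = tc_r t + 1 \<and>
               Max (set (map (qc_r \<circ> snd) (tc_qcs t))) \<le> qc_r q)))"

definition lst0 :: "'tx lst" where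
  "lst0 = \<lparr>rvote = 0, rcur = 1, qchigh = genesis_qc, seen = {}, touted = {}\<rparr>"

definition init :: "nat \<Rightarrow> nat set \<Rightarrow> 'tx gst \<Rightarrow> bool" where
  "init f F s \<longleftrightarrow> loc s = (\<lambda>i. lst0) \<and> votes s = {} \<and> touts s = {} \<and>
     (\<exists>x. props s = (if leader f 1 \<in> F then {} else {Block genesis_qc None 1 0 x}))"

text \<open>Steps of honest replicas i (i < n, i not in F). Byzantine replicas are modelled by the
validity predicates: they can send any message whose certificates are valid.\<close>

inductive step :: "nat \<Rightarrow> nat set \<Rightarrow> 'tx gst \<Rightarrow> 'tx gst \<Rightarrow> bool" for f F where
  recv_proposal:
  "\<lbrakk> i < nrep f; i \<notin> F; B = Block q tco r v x; r \<notin> seen (loc s i);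
     leader f r \<in> F \<or> B \<in> props s; valid_block f F s B;
     ls = loc s i;
     ls1 = (observe (q # tco_qcs tco) (max (qc_r q + 1) (tco_bound tco)) ls)\<lparr>seen := insert r (seen ls)\<rparr>;
     ok = vote_ok ls1 B;
     s' = s\<lparr>loc := (loc s)(i := (if ok then ls1\<lparr>rvote := r\<rparr> else ls1)),
            votes := (if ok then insert (i, B, r, 0) (votes s) else votes s),
            props := enter_props f i ls ls1 tco y (props s)\<rparr> \<rbrakk>
   \<Longrightarrow> step f F s s'"
| recv_timeout:
  "\<lbrakk> i < nrep f; i \<notin> F;
     (j \<in> F \<and> j < nrep f \<and> valid_qc f F s q \<and> qc_r q < r) \<or> (j, r, q) \<in> touts s;
     ls = loc s i; ls1 = observe [q] (qc_r q + 1) ls;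
     s' = s\<lparr>loc := (loc s)(i := ls1), props := enter_props f i ls ls1 None y (props s)\<rparr> \<rbrakk>
   \<Longrightarrow> step f F s s'"
| get_tc:
  "\<lbrakk> i < nrep f; i \<notin> F; valid_tc f F s t;
     ls = loc s i; ls1 = observe (map snd (tc_qcs t)) (tc_r t + 1) ls;
     s' = s\<lparr>loc := (loc s)(i := ls1), props := enter_props f i ls ls1 (Some t) y (props s)\<rparr> \<rbrakk>
   \<Longrightarrow> step f F s s'"
| form_qc:
  "\<lbrakk> i < nrep f; i \<notin> F; valid_qc f F s q; i = leader f (qc_r q + 1);
     ls = loc s i; ls1 = observe [q] (qc_r q + 1) ls;
     s' = s\<lparr>loc := (loc s)(i := ls1), props := enter_props f i ls ls1 None y (props s)\<rparr> \<rbrakk>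
   \<Longrightarrow> step f F s s'"
| timer_expiry:
  "\<lbrakk> i < nrep f; i \<notin> F; ls = loc s i; rcur ls \<notin> touted ls;
     s' = s\<lparr>loc := (loc s)(i := ls\<lparr>touted := insert (rcur ls) (touted ls)\<rparr>),
            touts := insert (i, rcur ls, qchigh ls) (touts s)\<rparr> \<rbrakk>
   \<Longrightarrow> step f F s s'"

inductive reachable :: "nat \<Rightarrow> nat set \<Rightarrow> 'tx gst \<Rightarrow> bool" for f F where
  "init f F s \<Longrightarrow> reachable f F s"
| "reachable f F s \<Longrightarrow> step f F s s' \<Longrightarrow> reachable f F s'"

definition certifies :: "nat \<Rightarrow> nat set \<Rightarrow> 'tx gst \<Rightarrow> 'tx qc \<Rightarrow> 'tx block \<Rightarrow> bool" where
  "certifies f F s q B \<longleftrightarrow> valid_qc f F s q \<and> qc_blk q = B"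

inductive extends :: "nat \<Rightarrow> nat set \<Rightarrow> 'tx gst \<Rightarrow> 'tx block \<Rightarrow> 'tx block \<Rightarrow> bool"
  for f F s where
  ext_refl: "extends f F s B B"
| ext_step: "\<lbrakk> extends f F s B B''; B' = Block q tco r v x; certifies f F s q B'' \<rbrakk>
             \<Longrightarrow> extends f F s B B'"

definition globally_direct_committed :: "nat \<Rightarrow> nat set \<Rightarrow> 'tx gst \<Rightarrow> 'tx block \<Rightarrow> bool" where
  "globally_direct_committed f F s B \<longleftrightarrow>
     (\<exists>B' q tco x. B' = Block q tco (bround B + 1) 0 x \<and> certifies f F s q B \<and>
        f + 1 \<le> card {i. i < nrep f \<and> i \<notin> F \<and> (i, B', bround B + 1, 0) \<in> votes s})"

end

theory Submission
  imports Defs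
begin

(* Let f+1 honest replicas have voted in round B.r+1 for a block B' whose QC certifies B; these
   replicas are then locked on a QC of round B.r. Every certified block C with C.r >= B.r extends B,
   by induction on C.r. If C.r = B.r, then C = B, because two QCs of the same round share an honest
   voter and honest replicas vote at most once per round; likewise C = B' if C.r = B.r+1. Otherwise
   C received an honest vote, so it satisfies the voting rule and its parent QC has round at least
   B.r: directly if the parent is from round C.r-1, and otherwise because the TC that C carries
   contains a timeout message from a locked replica, whose qc_high has round at least B.r. Two
   committed blocks are both certified, so the one of higher round extends the other. *)

lemma qc_r_fold_lockq_ge: "qc_r qh \<le> qc_r (fold lockq qs qh)"
proof (induction qs arbitrary: qh)
  case (Cons q qs)
  have "qc_r qh \<le> qc_r (lockq q qh)" by (simp add: lockq_def)
  with Cons show ?case by (metis fold_Cons comp_apply le_trans)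
qed simp

lemma qc_r_le_fold_lockq: "q \<in> set qs \<Longrightarrow> qc_r q \<le> qc_r (fold lockq qs qh)"
proof (induction qs arbitrary: qh)
  case (Cons q' qs)
  have "qc_r q' \<le> qc_r (lockq q' qh)" by (simp add: lockq_def)
  with Cons qc_r_fold_lockq_ge[of "lockq q' qh" qs] show ?case
    by auto
qed simp

lemma observe_simps [simp]:
  "rvote (observe qs rb ls) = rvote ls"
  "rcur (observe qs rb ls) = max (rcur ls) rb"
  "seen (observe qs rb ls) = seen ls"
  "touted (observe qs rb ls) = touted ls"
  by (simp_all add: observe_def)

lemma qchigh_observe: "qchigh (observe qs rb ls) = fold lockq qs (qchigh ls)"
  by (simp add: observe_def)

lemma qc_r_qchigh_observe_ge: "qc_r (qchigh ls) \<le> qc_r (qchigh (observe qs rb ls))"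
  by (simp add: qchigh_observe qc_r_fold_lockq_ge)

lemma valid_qc_mono:
  assumes "valid_qc f F s q" "votes s \<subseteq> votes s'"
  shows "valid_qc f F s' q"
proof (cases q)
  case (QC b r v)
  have "card {j. j < nrep f \<and> (j \<in> F \<or> (j, b, r, v) \<in> votes s)}
      \<le> card {j. j < nrep f \<and> (j \<in> F \<or> (j, b, r, v) \<in> votes s')}"
    by (rule card_mono) (use assms(2) in auto)
  with assms QC show ?thesis by (auto simp: valid_qc_def)
qed

lemma valid_tc_mono:
  assumes "valid_tc f F s t" "votes s \<subseteq> votes s'" "touts s \<subseteq> touts s'"
  shows "valid_tc f F s' t"
  using assms valid_qc_mono[OF _ assms(2)] by (cases t) (fastforce simp: valid_tc_def)

lemma valid_block_mono:
  assumes "valid_block f F s B" "votes s \<subseteq> votes s'" "touts s \<subseteq> touts s'"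
  shows "valid_block f F s' B"
  using assms valid_qc_mono[OF _ assms(2)] valid_tc_mono[OF _ assms(2,3)]
  by (cases B) (auto simp: valid_block_def)

lemma step_votes_mono: "step f F s s' \<Longrightarrow> votes s \<subseteq> votes s'"
  by (cases rule: step.cases) auto

lemma step_touts_mono: "step f F s s' \<Longrightarrow> touts s \<subseteq> touts s'"
  by (cases rule: step.cases) auto

lemma step_rvote_mono: "step f F s s' \<Longrightarrow> rvote (loc s i) \<le> rvote (loc s' i)"
  by (cases rule: step.cases) (auto simp: vote_ok_def split: block.splits)

lemma step_rcur_mono: "step f F s s' \<Longrightarrow> rcur (loc s i) \<le> rcur (loc s' i)"
  by (cases rule: step.cases) auto

lemma step_touted_mono: "step f F s s' \<Longrightarrow> touted (loc s i) \<subseteq> touted (loc s' i)"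
  by (cases rule: step.cases) auto

lemma step_qchigh_mono: "step f F s s' \<Longrightarrow> qc_r (qchigh (loc s i)) \<le> qc_r (qchigh (loc s' i))"
  by (cases rule: step.cases) (auto simp: qc_r_qchigh_observe_ge)

definition voting_rule :: "nat \<Rightarrow> 'tx qc \<Rightarrow> 'tx tc option \<Rightarrow> bool" where
  "voting_rule r q tco \<longleftrightarrow> r = qc_r q + 1 \<or>
     (\<exists>t. tco = Some t \<and> r = tc_r t + 1 \<and> Max (set (map (qc_r \<circ> snd) (tc_qcs t))) \<le> qc_r q)"

lemma vote_ok_Block:
  "vote_ok ls (Block q tco r v x) \<longleftrightarrow>
     r = rcur ls \<and> v = 0 \<and> rvote ls < r \<and> r \<notin> touted ls \<and> voting_rule r q tco"
  by (simp add: vote_ok_def voting_rule_def)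

definition justified_vote :: "nat \<Rightarrow> nat set \<Rightarrow> 'tx gst \<Rightarrow> nat \<Rightarrow> 'tx block \<Rightarrow> nat \<Rightarrow> bool" where
  "justified_vote f F s i B r \<longleftrightarrow> r \<le> rvote (loc s i) \<and>
     (\<exists>q tco x. B = Block q tco r 0 x \<and> valid_block f F s B \<and> qc_r q < r \<and>
        qc_r q \<le> qc_r (qchigh (loc s i)) \<and> voting_rule r q tco)"

lemma justified_vote_step:
  assumes "justified_vote f F s i B r" "step f F s s'"
  shows "justified_vote f F s' i B r"
proof -
  have "valid_block f F s B \<Longrightarrow> valid_block f F s' B"
    using valid_block_mono step_votes_mono[OF assms(2)] step_touts_mono[OF assms(2)] by blast
  with assms step_rvote_mono[OF assms(2), of i] step_qchigh_mono[OF assms(2), of i]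
  show ?thesis unfolding justified_vote_def by (blast intro: le_trans)
qed

lemma step_new_vote:
  assumes "step f F s s'" "(i, B, r, v) \<in> votes s'" "(i, B, r, v) \<notin> votes s"
  shows "justified_vote f F s' i B r \<and> votes s' = insert (i, B, r, v) (votes s) \<and>
    touts s' = touts s \<and> rvote (loc s i) < r \<and> rcur (loc s i) \<le> r \<and> r \<notin> touted (loc s i)"
  using assms(1)
proof cases
  case (recv_proposal i' B' q tco r' v' x ls ls1 ok y)
  have ok: "ok" and new: "(i, B, r, v) = (i', B', r', 0)"
    using recv_proposal assms(2,3) by (auto split: if_splits)
  have vote: "r = rcur ls1" "v' = 0" "rvote ls < r" "r \<notin> touted ls" "voting_rule r q tco"
    using recv_proposal ok new by (auto simp: vote_ok_Block)
  have "qc_r q \<le> qc_r (fold lockq (q # tco_qcs tco) (qchigh ls))"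
    by (rule qc_r_le_fold_lockq) simp
  then have locked: "qc_r q \<le> qc_r (qchigh ls1)"
    using recv_proposal by (simp add: qchigh_observe)
  have "valid_block f F s' B"
    using recv_proposal new valid_block_mono step_votes_mono[OF assms(1)] step_touts_mono[OF assms(1)]
    by blast
  with recv_proposal ok new vote locked show ?thesis
    by (auto simp: justified_vote_def)
qed (use assms(2,3) in auto)

lemma step_new_timeout:
  assumes "step f F s s'" "(i, r, qh) \<in> touts s'" "(i, r, qh) \<notin> touts s"
  shows "votes s' = votes s \<and> qh = qchigh (loc s i) \<and> r \<in> touted (loc s' i) \<and> r \<le> rcur (loc s' i)"
  using assms by cases auto

lemma reachable_vote_justified:
  "reachable f F s \<Longrightarrow> (i, B, r, v) \<in> votes s \<Longrightarrow> justified_vote f F s i B r"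
proof (induction arbitrary: i B r v rule: reachable.induct)
  case (2 s s')
  show ?case
  proof (cases "(i, B, r, v) \<in> votes s")
    case True
    from justified_vote_step[OF "2.IH"[OF True] "2.hyps"(2)] show ?thesis .
  next
    case False
    from step_new_vote[OF "2.hyps"(2) "2.prems" False] show ?thesis by blast
  qed
qed (simp add: init_def)

lemma reachable_vote_unique:
  "reachable f F s \<Longrightarrow> (i, B1, r, v1) \<in> votes s \<Longrightarrow> (i, B2, r, v2) \<in> votes s \<Longrightarrow> B1 = B2"
proof (induction arbitrary: i B1 B2 r v1 v2 rule: reachable.induct)
  case (2 s s')
  have new_vote_unique: "B = B'"
    if "(i, B, r, v) \<in> votes s'" "(i, B, r, v) \<notin> votes s" "(i, B', r, v') \<in> votes s'" for B v B' v'
  proof -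
    have "votes s' = insert (i, B, r, v) (votes s)" "rvote (loc s i) < r"
      using step_new_vote[OF "2.hyps"(2) that(1,2)] by blast+
    moreover have "r \<le> rvote (loc s i)" if "(i, B', r, v') \<in> votes s"
      using reachable_vote_justified[OF "2.hyps"(1) that] by (simp add: justified_vote_def)
    ultimately show ?thesis using that(3) by auto
  qed
  from "2.IH" "2.prems" show ?case by (metis new_vote_unique)
qed (simp add: init_def)

lemma reachable_timeout_touted:
  "reachable f F s \<Longrightarrow> (i, r, qh) \<in> touts s \<Longrightarrow> r \<in> touted (loc s i) \<and> r \<le> rcur (loc s i)"
proof (induction arbitrary: i r qh rule: reachable.induct)
  case (2 s s')
  show ?case
  proof (cases "(i, r, qh) \<in> touts s")
    case True
    with "2.IH" step_touted_mono[OF "2.hyps"(2), of i] step_rcur_mono[OF "2.hyps"(2), of i]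
    show ?thesis by fastforce
  next
    case False
    from step_new_timeout[OF "2.hyps"(2) "2.prems" False] show ?thesis by blast
  qed
qed (simp add: init_def)

lemma reachable_timeout_qc_ge_vote_qc:
  "reachable f F s \<Longrightarrow> (i, Block q tco r w x, r1, v) \<in> votes s \<Longrightarrow> (i, r2, qh) \<in> touts s \<Longrightarrow>
     r1 \<le> r2 \<Longrightarrow> qc_r q \<le> qc_r qh"
proof (induction arbitrary: i q tco r w x r1 v r2 qh rule: reachable.induct)
  case (2 s s')
  note step = "2.hyps"(2) and vote = "2.prems"(1) and timeout = "2.prems"(2)
  show ?case
  proof (cases "(i, Block q tco r w x, r1, v) \<in> votes s")
    case old_vote: True
    show ?thesis
    proof (cases "(i, r2, qh) \<in> touts s")
      case True
      with old_vote "2.IH" "2.prems"(3) show ?thesis by blast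
    next
      case False
      then have "qh = qchigh (loc s i)"
        using step_new_timeout[OF step timeout] by blast
      with reachable_vote_justified[OF "2.hyps"(1) old_vote] show ?thesis
        by (auto simp: justified_vote_def)
    qed
  next
    case False
    \<comment> \<open>A replica votes only in its current round and only before timing out there.\<close>
    then have "touts s' = touts s" "rcur (loc s i) \<le> r1" "r1 \<notin> touted (loc s i)"
      using step_new_vote[OF step vote] by blast+
    with timeout "2.prems"(3) reachable_timeout_touted[OF "2.hyps"(1), of i r2 qh]
    show ?thesis by (metis le_antisym le_trans)
  qed
qed (simp add: init_def)

lemma quorum_honest_part_card:
  assumes "finite F" "2 * f + 1 \<le> card {j. j < nrep f \<and> (j \<in> F \<or> P j)}"
  shows "2 * f + 1 \<le> card {j. j < nrep f \<and> j \<notin> F \<and> P j} + card F"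
proof -
  have "card {j. j < nrep f \<and> (j \<in> F \<or> P j)} \<le> card ({j. j < nrep f \<and> j \<notin> F \<and> P j} \<union> F)"
    by (rule card_mono) (use assms(1) in auto)
  also have "\<dots> \<le> card {j. j < nrep f \<and> j \<notin> F \<and> P j} + card F"
    by (rule card_Un_le)
  finally show ?thesis using assms(2) by linarith
qed

lemma quorum_intersects_honest:
  assumes "F \<subseteq> {..<nrep f}" "card F \<le> f"
    and "2 * f + 1 \<le> card {j. j < nrep f \<and> (j \<in> F \<or> P j)}"
    and "f + 1 \<le> card {j. j < nrep f \<and> j \<notin> F \<and> Q j}"
  obtains j where "j < nrep f" "j \<notin> F" "P j" "Q j"
proof (rule ccontr)
  let ?A = "{j. j < nrep f \<and> j \<notin> F \<and> P j}" and ?H = "{j. j < nrep f \<and> j \<notin> F \<and> Q j}"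
  assume "\<not> thesis"
  with that have "?A \<inter> ?H = {}"
    by blast
  then have "card ?A + card ?H = card (?A \<union> ?H)"
    by (simp add: card_Un_disjoint)
  also have "\<dots> \<le> card ({..<nrep f} - F)"
    by (rule card_mono) auto
  also have "\<dots> = nrep f - card F"
    using assms(1) by (simp add: card_Diff_subset finite_subset)
  finally show False
    using quorum_honest_part_card[OF finite_subset[OF assms(1) finite_lessThan] assms(3)] assms(2,4)
    by (simp add: nrep_def)
qed

lemma valid_tc_quorum:
  assumes "valid_tc f F s (TC r l)"
  shows "2 * f + 1 \<le> card {j. j < nrep f \<and> (j \<in> F \<or> (\<exists>q. (j, q) \<in> set l \<and> (j, r, q) \<in> touts s))}"
proof -
  have "length l = 2 * f + 1" "distinct (map fst l)"
    using assms by (simp_all add: valid_tc_def)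
  then have "2 * f + 1 = card (set (map fst l))"
    by (metis distinct_card length_map)
  also have "\<dots> \<le> card {j. j < nrep f \<and> (j \<in> F \<or> (\<exists>q. (j, q) \<in> set l \<and> (j, r, q) \<in> touts s))}"
    using assms by (intro card_mono) (fastforce simp: valid_tc_def)+
  finally show ?thesis .
qed

lemma valid_qc_bround: "valid_qc f F s q \<Longrightarrow> bround (qc_blk q) = qc_r q"
  by (cases q) (simp add: valid_qc_def)

context
  fixes f :: nat and F :: "nat set" and s :: "'tx gst"
  assumes faulty: "F \<subseteq> {..<nrep f}" "card F \<le> f" and reachable: "reachable f F s"
begin

lemma certified_honest_votes:
  assumes "certifies f F s q B" "B \<noteq> Genesis"
  shows "2 * f + 1 \<le> card {j. j < nrep f \<and> (j \<in> F \<or> (j, B, bround B, bview B) \<in> votes s)}"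
    and "f + 1 \<le> card {j. j < nrep f \<and> j \<notin> F \<and> (j, B, bround B, bview B) \<in> votes s}"
proof -
  show quorum: "2 * f + 1 \<le> card {j. j < nrep f \<and> (j \<in> F \<or> (j, B, bround B, bview B) \<in> votes s)}"
    using assms by (cases q) (auto simp: certifies_def valid_qc_def)
  from quorum_honest_part_card[OF finite_subset[OF faulty(1) finite_lessThan] quorum] faulty(2)
  show "f + 1 \<le> card {j. j < nrep f \<and> j \<notin> F \<and> (j, B, bround B, bview B) \<in> votes s}"
    by linarith
qed

lemma certified_block_justified:
  assumes "certifies f F s q (Block q' tco r v x)"
  shows "valid_block f F s (Block q' tco r v x) \<and> qc_r q' < r \<and> voting_rule r q' tco"
proof -
  let ?B = "Block q' tco r v x"
  have "f + 1 \<le> card {j. j < nrep f \<and> j \<notin> F \<and> (j, ?B, r, v) \<in> votes s}"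
    using certified_honest_votes(2)[OF assms] by simp
  then obtain j where "(j, ?B, r, v) \<in> votes s"
    by (metis (no_types, lifting) Collect_empty_eq card.empty add_is_0 le_zero_eq one_neq_zero)
  from reachable_vote_justified[OF reachable this] show ?thesis
    by (auto simp: justified_vote_def)
qed

lemma certified_round_pos:
  assumes "certifies f F s q B" "B \<noteq> Genesis"
  shows "0 < bround B"
  using assms certified_block_justified by (cases B) fastforce+

lemma certified_same_round_eq:
  assumes "certifies f F s q1 B1" "certifies f F s q2 B2" "bround B1 = bround B2"
  shows "B1 = B2"
proof (cases "B1 = Genesis \<or> B2 = Genesis")
  case True
  have "B = Genesis" if "certifies f F s q B" "bround B = 0" for q B
    using certified_round_pos that by fastforce
  with assms True show ?thesis by fastforce
next
  case False
  obtain j where "(j, B1, bround B1, bview B1) \<in> votes s" "(j, B2, bround B2, bview B2) \<in> votes s"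
    using quorum_intersects_honest[OF faulty certified_honest_votes(1)[OF assms(1)]
        certified_honest_votes(2)[OF assms(2)]] False by blast
  with reachable_vote_unique[OF reachable] show ?thesis unfolding assms(3) by blast
qed

lemma valid_tc_max_qc_ge_locked:
  assumes "f + 1 \<le> card {i. i < nrep f \<and> i \<notin> F \<and> (i, Block q0 tco0 r0 w0 x0, r0, v0) \<in> votes s}"
    and "valid_tc f F s (TC tr l)" "r0 \<le> tr"
  shows "qc_r q0 \<le> Max (set (map (qc_r \<circ> snd) l))"
proof -
  obtain j q where "(j, q) \<in> set l" "(j, tr, q) \<in> touts s"
    "(j, Block q0 tco0 r0 w0 x0, r0, v0) \<in> votes s"
    using quorum_intersects_honest[OF faulty valid_tc_quorum[OF assms(2)] assms(1)] by blast
  then have "qc_r q0 \<le> qc_r q"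
    using reachable_timeout_qc_ge_vote_qc[OF reachable] assms(3) by blast
  also have "qc_r q \<le> Max (set (map (qc_r \<circ> snd) l))"
    using \<open>(j, q) \<in> set l\<close> by (intro Max_ge) force+
  finally show ?thesis .
qed

lemma voting_rule_respects_lock:
  assumes "f + 1 \<le> card {i. i < nrep f \<and> i \<notin> F \<and> (i, Block q0 tco0 r0 w0 x0, r0, v0) \<in> votes s}"
    and "qc_r q0 < r0" "valid_block f F s (Block q tco r w x)" "voting_rule r q tco" "r0 < r"
  shows "qc_r q0 \<le> qc_r q"
  using assms(4) unfolding voting_rule_def
proof
  assume "r = qc_r q + 1"
  with assms(2,5) show ?thesis by simp
next
  assume "\<exists>t. tco = Some t \<and> r = tc_r t + 1 \<and> Max (set (map (qc_r \<circ> snd) (tc_qcs t))) \<le> qc_r q"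
  then obtain tr l where tc: "tco = Some (TC tr l)" "r = tr + 1"
    and "Max (set (map (qc_r \<circ> snd) l)) \<le> qc_r q"
    by (metis tc.exhaust tc_qcs.simps tc_r.simps)
  moreover have "valid_tc f F s (TC tr l)"
    using assms(3) tc(1) by (simp add: valid_block_def)
  ultimately show ?thesis
    using valid_tc_max_qc_ge_locked[OF assms(1)] assms(5) by fastforce
qed

lemma certified_extends_direct_committed:
  assumes "globally_direct_committed f F s B" "certifies f F s q C" "bround B \<le> bround C"
  shows "extends f F s B C"
proof -
  obtain q0 tco0 x0 where cert_B: "certifies f F s q0 B"
    and votes_B': "f + 1 \<le> card {i. i < nrep f \<and> i \<notin> F \<and>
      (i, Block q0 tco0 (bround B + 1) 0 x0, bround B + 1, 0) \<in> votes s}"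
    using assms(1) unfolding globally_direct_committed_def by blast
  have q0_round: "qc_r q0 = bround B"
    using cert_B valid_qc_bround unfolding certifies_def by metis
  from assms(2,3) show ?thesis
  proof (induction "bround C" arbitrary: q C rule: less_induct)
    case less
    consider "bround C = bround B" | "bround C = bround B + 1" | "bround B + 1 < bround C"
      using less.prems(2) by linarith
    then show ?case
    proof cases
      case 1
      with certified_same_round_eq[OF cert_B less.prems(1)] show ?thesis
        by (simp add: ext_refl)
    next
      case 2
      then have "C \<noteq> Genesis" by auto
      then obtain j where "(j, C, bround C, bview C) \<in> votes s"
        "(j, Block q0 tco0 (bround B + 1) 0 x0, bround B + 1, 0) \<in> votes s"
        using quorum_intersects_honest[OF faulty certified_honest_votes(1)[OF less.prems(1)] votes_B']
        by blast
      with 2 have "C = Block q0 tco0 (bround B + 1) 0 x0"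
        using reachable_vote_unique[OF reachable] by metis
      then show ?thesis using ext_step[OF ext_refl _ cert_B] by blast
    next
      case 3
      then obtain qC tco r v x where C: "C = Block qC tco r v x"
        by (cases C) auto
      with less.prems(1) certified_block_justified
      have valid_C: "valid_block f F s C" and "qc_r qC < r" and "voting_rule r qC tco"
        by blast+
      moreover have "qc_r q0 \<le> qc_r qC"
        using voting_rule_respects_lock[OF votes_B'] valid_C \<open>voting_rule r qC tco\<close> q0_round 3 C
        by simp
      moreover have cert_parent: "certifies f F s qC (qc_blk qC)"
        using valid_C C by (simp add: certifies_def valid_block_def)
      ultimately have "extends f F s B (qc_blk qC)"
        using less.hyps C q0_round valid_qc_bround by (metis bround.simps(2) certifies_def)
      with C(1) cert_parent show ?thesis by (blast intro: ext_step)
    qed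
  qed
qed

end

theorem theorem2:
  fixes f :: nat and F :: "nat set" and s :: "'tx gst" and B B' :: "'tx block"
  assumes "F \<subseteq> {..<nrep f}" and "card F \<le> f"
    and "reachable f F s"
    and "globally_direct_committed f F s B"
    and "globally_direct_committed f F s B'"
  shows "extends f F s B B' \<or> extends f F s B' B"
proof -
  obtain q where "certifies f F s q B"
    using assms(4) unfolding globally_direct_committed_def by blast
  moreover obtain q' where "certifies f F s q' B'"
    using assms(5) unfolding globally_direct_committed_def by blast
  ultimately show ?thesis
    using certified_extends_direct_committed[OF assms(1-3)] assms(4,5) by (meson nat_le_linear)
qed

end
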